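(* Let $\rho_1, \rho_2$ be $N \times N$ density matrices (positive semidefinite complex matrices with unit trace), let $P_+$ be the orthogonal projector onto the span of the eigenvectors of $\rho_1-\rho_2$ with positive eigenvalues, and $P_-$ the orthogonal projector onto the span of the eigenvectors of $\rho_1-\rho_2$ with negative eigenvalues. Let $I$ denote the $N\times N$ identity matrix. Then $$\mathrm{tr}\,P_+(I-\rho_1)\rho_1 \ge \mathrm{tr}\,P_+(I-\rho_1)\rho_2,$$ $$\mathrm{tr}\,P_-\rho_1(I-\rho_1) \ge \mathrm{tr}\,P_-\rho_1(I-\rho_2),$$ $$\mathrm{tr}\,P_+(I-\rho_2)\rho_2 \ge \mathrm{tr}\,P_+(I-\rho_1)\rho_2,$$ $$\mathrm{tr}\,P_-\rho_2(I-\rho_2) \ge \mathrm{tr}\,P_-\rho_1(I-\rho_2).$$ *)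

theory Defs
  imports "Jordan_Normal_Form.Matrix_Kernel" "Jordan_Normal_Form.Char_Poly"
    "Jordan_Normal_Form.Schur_Decomposition"
begin

definition mtrace :: "complex mat \<Rightarrow> complex" where
  "mtrace A = (\<Sum>i\<in>{0..<dim_row A}. A $$ (i, i))"

definition cspan :: "nat \<Rightarrow> complex vec set \<Rightarrow> complex vec set" where
  "cspan n S = LinearCombinations.module.span class_ring (module_vec TYPE(complex) n) S"

text \<open>Positive semidefinite: Hermitian and nonnegative quadratic form
  (the order on complex is the one from HOL-Library.Complex_Order, so 0 \<le> z means z is real and nonnegative).\<close>
definition psd_mat :: "nat \<Rightarrow> complex mat \<Rightarrow> bool" where
  "psd_mat n A \<longleftrightarrow> A \<in> carrier_mat n n \<and> mat_adjoint A = A \<and>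
     (\<forall>v \<in> carrier_vec n. 0 \<le> conjugate v \<bullet> (A *\<^sub>v v))"

definition density_mat :: "nat \<Rightarrow> complex mat \<Rightarrow> bool" where
  "density_mat n A \<longleftrightarrow> psd_mat n A \<and> mtrace A = 1"

definition orth_projector :: "nat \<Rightarrow> complex mat \<Rightarrow> bool" where
  "orth_projector n P \<longleftrightarrow> P \<in> carrier_mat n n \<and> P * P = P \<and> mat_adjoint P = P"

definition projector_onto_eigvecs ::
  "nat \<Rightarrow> complex mat \<Rightarrow> (complex \<Rightarrow> bool) \<Rightarrow> complex mat \<Rightarrow> bool" where
  "projector_onto_eigvecs n A Q P \<longleftrightarrow> orth_projector n P \<and>
     {P *\<^sub>v x | x. x \<in> carrier_vec n} = cspan n {v. \<exists>k. Q k \<and> eigenvector A v k}"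

end

theory Submission
  imports Defs
begin

text \<open>
  Write \<open>D = \<rho>1 - \<rho>2 = U L U\<^sup>*\<close> with \<open>U\<close> unitary and \<open>L\<close> diagonal (the spectral theorem,
  obtained from a unitary Schur decomposition). Then \<open>P\<^sub>\<plusminus> = U I\<^sub>\<plusminus> U\<^sup>*\<close>, where \<open>I\<^sub>\<plusminus>\<close> is the
  0/1 diagonal matrix selecting the positive (negative) entries of \<open>L\<close>. Hence \<open>P\<^sub>\<plusminus>\<close> commutes
  with \<open>D\<close>, and \<open>D P\<^sub>\<plusminus> = U (L I\<^sub>\<plusminus>) U\<^sup>*\<close> with \<open>L I\<^sub>+ \<ge> 0 \<ge> L I\<^sub>-\<close>. By cyclicity of the
  trace each inequality says \<open>\<plusminus> tr (X D P\<^sub>\<plusminus>) \<ge> 0\<close> for \<open>X\<close> one of \<open>\<rho>1, \<rho>2, I - \<rho>1, I - \<rho>2\<close>,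
  and \<open>tr (X U E U\<^sup>*) = \<Sum>\<^sub>i E\<^sub>i\<^sub>i \<langle>u\<^sub>i, X u\<^sub>i\<rangle>\<close> for diagonal \<open>E\<close>. Each such \<open>X\<close> has a
  nonnegative quadratic form on unit vectors; for \<open>I - \<rho>\<close> this is \<open>\<langle>u, \<rho> u\<rangle> \<le> tr \<rho> = 1\<close>,
  computing the trace in an orthonormal basis that starts with \<open>u\<close>.
\<close>

lemma dim_mat_adjoint[simp]:
  "dim_row (mat_adjoint A) = dim_col A" "dim_col (mat_adjoint A) = dim_row A"
  unfolding mat_adjoint_def by (auto simp: mat_of_rows_def)

lemma index_mat_adjoint[simp]:
  "i < dim_col A \<Longrightarrow> j < dim_row A \<Longrightarrow> mat_adjoint A $$ (i, j) = conjugate (A $$ (j, i))"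
  unfolding mat_adjoint_def by (auto simp: mat_of_rows_def)

lemma mat_adjoint_carrier[simp]: "A \<in> carrier_mat n m \<Longrightarrow> mat_adjoint A \<in> carrier_mat m n"
  unfolding carrier_mat_def by simp

lemma mat_adjoint_adjoint[simp]: "mat_adjoint (mat_adjoint A) = A"
  by (rule eq_matI) simp_all

lemma row_mat_adjoint: "i < dim_col A \<Longrightarrow> row (mat_adjoint A) i = conjugate (col A i)"
  by (rule eq_vecI) simp_all

lemma mat_adjoint_mult:
  fixes A B :: "'a :: conjugatable_field mat"
  assumes "A \<in> carrier_mat n m" "B \<in> carrier_mat m k"
  shows "mat_adjoint (A * B) = mat_adjoint B * mat_adjoint A"
  by (rule eq_matI)
    (use assms in \<open>auto simp: scalar_prod_def sum_conjugate conjugate_dist_mul mult.commute\<close>)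

lemma mat_adjoint_one[simp]: "mat_adjoint (1\<^sub>m n :: complex mat) = 1\<^sub>m n"
  by (rule eq_matI) simp_all

lemma mat_adjoint_zero[simp]: "mat_adjoint (0\<^sub>m n m :: complex mat) = 0\<^sub>m m n"
  by (rule eq_matI) simp_all

lemma mat_adjoint_minus:
  fixes A B :: "complex mat"
  assumes "A \<in> carrier_mat n m" "B \<in> carrier_mat n m"
  shows "mat_adjoint (A - B) = mat_adjoint A - mat_adjoint B"
  by (rule eq_matI) (use assms in simp_all)

lemma mat_adjoint_four_block_mat:
  assumes "A \<in> carrier_mat n1 m1" "B \<in> carrier_mat n1 m2" "C \<in> carrier_mat n2 m1"
    "D \<in> carrier_mat n2 m2"
  shows "mat_adjoint (four_block_mat A B C D)
    = four_block_mat (mat_adjoint A) (mat_adjoint C) (mat_adjoint B) (mat_adjoint D)"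
  by (rule eq_matI) (use assms in simp_all)

lemma index_mat_adjoint_mult:
  assumes "A \<in> carrier_mat n m" "B \<in> carrier_mat n k" "i < m" "j < k"
  shows "(mat_adjoint A * B) $$ (i, j) = conjugate (col A i) \<bullet> col B j"
  using assms by (simp add: row_mat_adjoint)

lemma index_mat_adjoint_mult_mult:
  assumes U: "U \<in> carrier_mat n m" and X: "X \<in> carrier_mat n n" and "i < m" "j < m"
  shows "(mat_adjoint U * X * U) $$ (i, j) = conjugate (col U i) \<bullet> (X *\<^sub>v col U j)"
proof -
  have "mat_adjoint U * X * U = mat_adjoint U * (X * U)"
    using U X by (intro assoc_mult_mat[of _ m n _ n _ m]) auto
  then show ?thesis
    using index_mat_adjoint_mult[of U n m "X * U" m i j] col_mult2[OF X U] assms by simp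
qed

lemma mult_mat_vec_zero[simp]: "A \<in> carrier_mat n m \<Longrightarrow> A *\<^sub>v 0\<^sub>v m = 0\<^sub>v n"
  by (rule eq_vecI) (auto simp: scalar_prod_def)

lemma mtrace_mult_comm:
  assumes A: "A \<in> carrier_mat n m" and B: "B \<in> carrier_mat m n"
  shows "mtrace (A * B) = mtrace (B * A)"
proof -
  have "mtrace (A * B) = (\<Sum>i<n. \<Sum>j<m. A $$ (i, j) * B $$ (j, i))"
    using A B by (simp add: mtrace_def scalar_prod_def atLeast0LessThan)
  also have "\<dots> = (\<Sum>j<m. \<Sum>i<n. A $$ (i, j) * B $$ (j, i))"
    by (rule sum.swap)
  also have "\<dots> = mtrace (B * A)"
    using A B by (simp add: mtrace_def scalar_prod_def atLeast0LessThan mult.commute)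
  finally show ?thesis .
qed

lemma mtrace_mult_cycle:
  assumes "A \<in> carrier_mat n n" "B \<in> carrier_mat n n" "C \<in> carrier_mat n n"
  shows "mtrace (A * B * C) = mtrace (B * (C * A))"
proof -
  have "mtrace (A * (B * C)) = mtrace (B * C * A)"
    using assms by (intro mtrace_mult_comm[of _ n n]) (auto intro!: mult_carrier_mat)
  then show ?thesis using assms by (simp add: assoc_mult_mat[of _ n n _ n _ n])
qed

lemma mtrace_minus:
  "A \<in> carrier_mat n n \<Longrightarrow> B \<in> carrier_mat n n \<Longrightarrow> mtrace (A - B) = mtrace A - mtrace B"
  by (simp add: mtrace_def sum_subtractf)

lemma mtrace_mult_minus_right:
  assumes "A \<in> carrier_mat n n" "B \<in> carrier_mat n n" "C1 \<in> carrier_mat n n" "C2 \<in> carrier_mat n n"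
  shows "mtrace (A * B * C1) - mtrace (A * B * C2) = mtrace (B * ((C1 - C2) * A))"
proof -
  have AB: "A * B \<in> carrier_mat n n" using assms(1,2) by (rule mult_carrier_mat)
  have "mtrace (A * B * C1) - mtrace (A * B * C2) = mtrace (A * B * (C1 - C2))"
    using mtrace_minus[of "A * B * C1" n "A * B * C2"] mult_minus_distrib_mat[OF AB assms(3,4)] AB assms
    by simp
  also have "\<dots> = mtrace (B * ((C1 - C2) * A))"
    using assms by (intro mtrace_mult_cycle) auto
  finally show ?thesis .
qed

lemma mtrace_mult_minus_mid:
  assumes "A \<in> carrier_mat n n" "B1 \<in> carrier_mat n n" "B2 \<in> carrier_mat n n" "C \<in> carrier_mat n n"
  shows "mtrace (A * B1 * C) - mtrace (A * B2 * C) = mtrace (C * (A * (B1 - B2)))"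
proof -
  have "mtrace (A * B1 * C) - mtrace (A * B2 * C) = mtrace (A * (B1 - B2) * C)"
    using assms by (simp add: mult_minus_distrib_mat[of _ n n] minus_mult_distrib_mat[of _ n n]
        mtrace_minus[of _ n] mult_carrier_mat[of _ n n])
  also have "\<dots> = mtrace (C * (A * (B1 - B2)))"
    using assms by (intro mtrace_mult_comm[of _ n n]) (auto simp: mult_carrier_mat[of _ n n])
  finally show ?thesis .
qed

lemma index_mult_diagonal_mat:
  assumes "A \<in> carrier_mat n n" "E \<in> carrier_mat n n" "diagonal_mat E" "i < n" "j < n"
  shows "(A * E) $$ (i, j) = A $$ (i, j) * E $$ (j, j)"
proof -
  have "(A * E) $$ (i, j) = (\<Sum>k\<in>{0..<n}. A $$ (i, k) * E $$ (k, j))"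
    using assms by (simp add: scalar_prod_def)
  also have "\<dots> = (\<Sum>k\<in>{0..<n}. if k = j then A $$ (i, k) * E $$ (k, j) else 0)"
    using assms by (intro sum.cong) (auto simp: diagonal_mat_def)
  finally show ?thesis using assms by simp
qed

lemma diagonal_mat_mult:
  assumes "A \<in> carrier_mat n n" "B \<in> carrier_mat n n" "diagonal_mat A" "diagonal_mat B"
  shows "diagonal_mat (A * B)"
  unfolding diagonal_mat_def
proof (intro allI impI)
  fix i j assume ij: "i < dim_row (A * B)" "j < dim_col (A * B)" "i \<noteq> j"
  then have "i < n" "j < n" using assms by auto
  then show "(A * B) $$ (i, j) = 0"
    unfolding index_mult_diagonal_mat[OF assms(1,2,4) \<open>i < n\<close> \<open>j < n\<close>]
    using assms(1,3) ij(3) by (simp add: diagonal_mat_def)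
qed

lemma diagonal_mat_mult_comm:
  fixes A B :: "'a :: comm_semiring_0 mat"
  assumes "A \<in> carrier_mat n n" "B \<in> carrier_mat n n" "diagonal_mat A" "diagonal_mat B"
  shows "A * B = B * A"
proof (rule eq_matI)
  fix i j assume "i < dim_row (B * A)" "j < dim_col (B * A)"
  then have ij: "i < n" "j < n" using assms by auto
  show "(A * B) $$ (i, j) = (B * A) $$ (i, j)"
    unfolding index_mult_diagonal_mat[OF assms(1,2,4) ij] index_mult_diagonal_mat[OF assms(2,1,3) ij]
    using assms ij by (cases "i = j") (auto simp: diagonal_mat_def mult.commute)
qed (use assms in auto)

lemma mult_mat_vec_diagonal:
  assumes "L \<in> carrier_mat n n" "diagonal_mat L" "c \<in> carrier_vec n" "i < n"
  shows "(L *\<^sub>v c) $ i = L $$ (i, i) * c $ i"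
proof -
  have "(L *\<^sub>v c) $ i = (\<Sum>j\<in>{0..<n}. L $$ (i, j) * c $ j)"
    using assms by (simp add: scalar_prod_def)
  also have "\<dots> = (\<Sum>j\<in>{0..<n}. if j = i then L $$ (i, j) * c $ j else 0)"
    using assms by (intro sum.cong) (auto simp: diagonal_mat_def)
  finally show ?thesis using assms(4) by simp
qed

lemma mtrace_mult_diagonal_mat:
  assumes "A \<in> carrier_mat n n" "E \<in> carrier_mat n n" "diagonal_mat E"
  shows "mtrace (A * E) = (\<Sum>i\<in>{0..<n}. A $$ (i, i) * E $$ (i, i))"
proof -
  have "dim_row (A * E) = n" using assms by simp
  then show ?thesis unfolding mtrace_def
    by (intro sum.cong) (auto simp: index_mult_diagonal_mat[OF assms] simp del: index_mult_mat(1))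
qed

definition unitary :: "nat \<Rightarrow> complex mat \<Rightarrow> bool" where
  "unitary n U \<longleftrightarrow> U \<in> carrier_mat n n \<and> mat_adjoint U * U = 1\<^sub>m n \<and> U * mat_adjoint U = 1\<^sub>m n"

lemma unitaryD:
  assumes "unitary n U"
  shows "U \<in> carrier_mat n n" "mat_adjoint U * U = 1\<^sub>m n" "U * mat_adjoint U = 1\<^sub>m n"
  using assms unfolding unitary_def by auto

lemma unitaryI:
  assumes "U \<in> carrier_mat n n" "mat_adjoint U * U = 1\<^sub>m n"
  shows "unitary n U"
  using assms mat_mult_left_right_inverse[of "mat_adjoint U" n U] unfolding unitary_def by simp

lemma unitary_one[simp]: "unitary n (1\<^sub>m n)"
  by (rule unitaryI) simp_all

lemma unitary_cancel:
  assumes "unitary n U" "X \<in> carrier_mat n k"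
  shows "mat_adjoint U * (U * X) = X" "U * (mat_adjoint U * X) = X"
  using unitaryD[OF assms(1)] assms(2)
  by (simp_all flip: assoc_mult_mat[of _ n n _ n _ k])

lemma unitary_cancel_vec:
  assumes "unitary n U" "v \<in> carrier_vec n"
  shows "mat_adjoint U *\<^sub>v (U *\<^sub>v v) = v" "U *\<^sub>v (mat_adjoint U *\<^sub>v v) = v"
  using unitaryD[OF assms(1)] assms(2)
  by (simp_all flip: assoc_mult_mat_vec[of _ n n _ n])

lemma unitary_mult:
  assumes "unitary n U" "unitary n V"
  shows "unitary n (U * V)"
proof (rule unitaryI)
  note u = unitaryD[OF assms(1)] and v = unitaryD[OF assms(2)]
  show "U * V \<in> carrier_mat n n" using u v by simp
  show "mat_adjoint (U * V) * (U * V) = 1\<^sub>m n"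
    using u v assms
    by (simp add: mat_adjoint_mult[of _ n n] assoc_mult_mat[of _ n n _ n _ n] unitary_cancel)
qed

lemma unitary_col_cscalar_prod:
  assumes "unitary n U" "i < n" "j < n"
  shows "conjugate (col U i) \<bullet> col U j = (if i = j then 1 else 0)"
  using index_mat_adjoint_mult[of U n n U n i j] unitaryD[OF assms(1)] assms(2,3) by simp

lemma unitary_col_unit:
  assumes "unitary n U" "i < n"
  shows "col U i \<in> carrier_vec n" "col U i \<bullet>c col U i = 1"
proof -
  show c: "col U i \<in> carrier_vec n" using unitaryD(1)[OF assms(1)] assms(2) by simp
  have "conjugate (col U i) \<bullet> col U i = 1"
    using unitary_col_cscalar_prod[OF assms assms(2)] by simp
  then show "col U i \<bullet>c col U i = 1"
    using comm_scalar_prod[of "col U i" n "conjugate (col U i)"] c by simp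
qed

lemma unitary_conj_cancel:
  assumes "unitary n U" "X \<in> carrier_mat n n"
  shows "U * (mat_adjoint U * X * U) * mat_adjoint U = X"
    "mat_adjoint U * (U * X * mat_adjoint U) * U = X"
  using unitaryD[OF assms(1)] assms
  by (simp_all add: assoc_mult_mat[of _ n n _ n _ n] mult_carrier_mat[of _ n n] unitary_cancel)

lemma unitary_four_block_mat:
  assumes U: "unitary k U" and V: "unitary m V"
  shows "unitary (k + m) (four_block_mat U (0\<^sub>m k m) (0\<^sub>m m k) V)"
proof -
  note u = unitaryD[OF U] and v = unitaryD[OF V]
  define F where "F = four_block_mat U (0\<^sub>m k m) (0\<^sub>m m k) V"
  have "mat_adjoint F * F = four_block_mat (mat_adjoint U * U) (0\<^sub>m k m) (0\<^sub>m m k) (mat_adjoint V * V)"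
    unfolding F_def using u v
    by (simp add: mat_adjoint_four_block_mat[of _ k k _ m _ m]
        mult_four_block_mat[of _ k k _ m _ m _ _ k _ m])
  then show ?thesis
    unfolding F_def[symmetric] using u v by (intro unitaryI) (simp_all add: F_def)
qed

definition vec_normalize :: "complex vec \<Rightarrow> complex vec" where
  "vec_normalize w = complex_of_real (1 / sqrt (Re (w \<bullet>c w))) \<cdot>\<^sub>v w"

lemma vec_normalize_carrier[simp]: "w \<in> carrier_vec n \<Longrightarrow> vec_normalize w \<in> carrier_vec n"
  unfolding vec_normalize_def by simp

lemma cscalar_prod_vec_normalize:
  assumes "v \<in> carrier_vec n" "w \<in> carrier_vec n"
  shows "vec_normalize v \<bullet>c vec_normalize w
    = complex_of_real (1 / sqrt (Re (v \<bullet>c v)) * (1 / sqrt (Re (w \<bullet>c w)))) * (v \<bullet>c w)"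
  using assms unfolding vec_normalize_def by (simp add: conjugate_smult_vec)

lemma cscalar_prod_self_eq_Re: "w \<bullet>c w = complex_of_real (Re (w \<bullet>c w))"
  using conjugate_square_ge_0_vec[of w] by (simp add: less_eq_complex_def complex_eq_iff)

lemma vec_normalize_norm:
  assumes "w \<in> carrier_vec n" "w \<noteq> 0\<^sub>v n"
  shows "vec_normalize w \<bullet>c vec_normalize w = 1"
proof -
  define r where "r = Re (w \<bullet>c w)"
  have "w \<bullet>c w \<noteq> 0" using assms by simp
  then have "r \<noteq> 0" unfolding r_def by (metis cscalar_prod_self_eq_Re of_real_0)
  then have "r > 0"
    using conjugate_square_ge_0_vec[of w] by (simp add: r_def less_eq_complex_def)
  have "vec_normalize w \<bullet>c vec_normalize w = complex_of_real (1 / sqrt r * (1 / sqrt r) * r)"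
    unfolding cscalar_prod_vec_normalize[OF assms(1) assms(1)] r_def
    by (subst (3) cscalar_prod_self_eq_Re) simp
  also have "1 / sqrt r * (1 / sqrt r) * r = 1" using \<open>r > 0\<close> by (simp add: field_simps)
  finally show ?thesis by simp
qed

lemma vec_normalize_orthonormal:
  assumes ws: "set ws \<subseteq> carrier_vec n" "corthogonal ws" and i: "i < length ws" and j: "j < length ws"
  shows "vec_normalize (ws ! i) \<bullet>c vec_normalize (ws ! j) = (if i = j then 1 else 0)"
proof (cases "i = j")
  case True
  have w: "ws ! i \<in> carrier_vec n" using ws(1) i by auto
  have "ws ! i \<bullet>c ws ! i \<noteq> 0" using ws(2) i by (auto simp: corthogonal_def)
  then show ?thesis using True vec_normalize_norm[OF w] conjugate_square_eq_0_vec[OF w] by auto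
next
  case False
  then have "ws ! i \<bullet>c ws ! j = 0" using ws(2) i j by (auto simp: corthogonal_def)
  moreover have "ws ! i \<in> carrier_vec n" "ws ! j \<in> carrier_vec n" using ws(1) i j by auto
  ultimately show ?thesis using False by (simp add: cscalar_prod_vec_normalize)
qed

lemma vec_normalize_unit: "w \<bullet>c w = 1 \<Longrightarrow> vec_normalize w = w"
  unfolding vec_normalize_def by simp

lemma unitary_mat_of_cols:
  assumes us: "set us \<subseteq> carrier_vec n" "length us = n"
    and orthonormal: "\<And>i j. i < n \<Longrightarrow> j < n \<Longrightarrow> us ! j \<bullet>c us ! i = (if i = j then 1 else 0)"
  shows "unitary n (mat_of_cols n us)"
proof (rule unitaryI)
  show U: "mat_of_cols n us \<in> carrier_mat n n" using mat_of_cols_carrier(1)[of n us] us by simp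
  show "mat_adjoint (mat_of_cols n us) * mat_of_cols n us = 1\<^sub>m n"
  proof (rule eq_matI)
    fix i j assume "i < dim_row (1\<^sub>m n :: complex mat)" "j < dim_col (1\<^sub>m n :: complex mat)"
    then have ij: "i < n" "j < n" by simp_all
    then have "col (mat_of_cols n us) i = us ! i" "col (mat_of_cols n us) j = us ! j"
      using us by (auto intro!: col_mat_of_cols)
    moreover have "us ! i \<in> carrier_vec n" "us ! j \<in> carrier_vec n" using ij us by auto
    then have "conjugate (us ! i) \<bullet> us ! j = us ! j \<bullet>c us ! i"
      by (intro comm_scalar_prod[of _ n]) auto
    ultimately show "(mat_adjoint (mat_of_cols n us) * mat_of_cols n us) $$ (i, j) = 1\<^sub>m n $$ (i, j)"
      using ij orthonormal[OF ij] index_mat_adjoint_mult[OF U U ij] by simp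
  qed (use U in auto)
qed

lemma exists_unitary_first_col:
  assumes v: "v \<in> carrier_vec n" and unit: "v \<bullet>c v = 1"
  shows "\<exists>U. unitary n U \<and> col U 0 = v"
proof -
  interpret cof_vec_space n "TYPE(complex)" .
  have v0: "v \<noteq> 0\<^sub>v n" using unit by auto
  then have "0 < n" using v by (cases n) auto
  from basis_completion[OF v v0] obtain b where b: "distinct b" "\<not> lin_dep (set b)"
    "set b \<subseteq> carrier_vec n" "length b = n" "hd b = v"
    by blast
  with \<open>0 < n\<close> obtain vs where bv: "b = v # vs" by (cases b) auto
  define ws where "ws = gram_schmidt n b"
  have ws: "set ws \<subseteq> carrier_vec n" "corthogonal ws" "length ws = n" "hd ws = v"
    using gram_schmidt_result[OF b(3,1,2) ws_def] b(4) v unfolding ws_def bv by auto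
  define us where "us = map vec_normalize ws"
  have us: "set us \<subseteq> carrier_vec n" "length us = n"
    using ws unfolding us_def by auto
  have "unitary n (mat_of_cols n us)"
    using us ws vec_normalize_orthonormal[OF ws(1,2)] by (intro unitary_mat_of_cols) (auto simp: us_def)
  moreover have "col (mat_of_cols n us) 0 = v"
    using us ws \<open>0 < n\<close> vec_normalize_unit[OF unit] by (cases ws) (auto simp: us_def)
  ultimately show ?thesis by blast
qed

section \<open>Unitary Schur decomposition and the spectral theorem\<close>

lemma exists_unit_eigenvector:
  fixes A :: "complex mat"
  assumes A: "A \<in> carrier_mat n n" and n: "0 < n"
  shows "\<exists>e v. v \<in> carrier_vec n \<and> v \<bullet>c v = 1 \<and> A *\<^sub>v v = e \<cdot>\<^sub>v v"
proof -
  obtain es where "char_poly A = (\<Prod>a\<leftarrow>es. [:- a, 1:])" "length es = n"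
    using char_poly_factorized[OF A] by blast
  with n obtain e es' where "char_poly A = [:- e, 1:] * (\<Prod>a\<leftarrow>es'. [:- a, 1:])"
    by (cases es) auto
  then have "eigenvalue A e" by (simp add: eigenvalue_root_char_poly[OF A])
  then obtain w where w: "w \<in> carrier_vec n" "w \<noteq> 0\<^sub>v n" "A *\<^sub>v w = e \<cdot>\<^sub>v w"
    using A unfolding eigenvalue_def eigenvector_def by auto
  have "vec_normalize w \<bullet>c vec_normalize w = 1" using vec_normalize_norm[OF w(1,2)] .
  moreover have "A *\<^sub>v vec_normalize w = e \<cdot>\<^sub>v vec_normalize w"
    using w A by (simp add: vec_normalize_def mult_mat_vec smult_smult_assoc mult.commute)
  ultimately show ?thesis using w by auto
qed

lemma unitary_conj_col_eigenvector:
  assumes W: "unitary n W" and A: "A \<in> carrier_mat n n" and j: "j < n"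
    and ev: "A *\<^sub>v col W j = e \<cdot>\<^sub>v col W j"
  shows "col (mat_adjoint W * A * W) j = e \<cdot>\<^sub>v unit_vec n j"
proof -
  note w = unitaryD[OF W]
  have "col (mat_adjoint W * A * W) j = (mat_adjoint W * A) *\<^sub>v col W j"
    using w A j by (intro col_mult2) auto
  also have "\<dots> = mat_adjoint W *\<^sub>v (A *\<^sub>v col W j)"
    using w A j by (intro assoc_mult_mat_vec) auto
  also have "\<dots> = e \<cdot>\<^sub>v (mat_adjoint W *\<^sub>v col W j)"
    using w j by (simp add: ev mult_mat_vec[of _ n n])
  also have "mat_adjoint W *\<^sub>v col W j = unit_vec n j"
    using col_mult2[of "mat_adjoint W" n n W n j] w j by simp
  finally show ?thesis .
qed

lemma four_block_mat_unitary_conj: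
  assumes V: "unitary m V" and B1: "B1 \<in> carrier_mat k k" and B2: "B2 \<in> carrier_mat k m"
    and T: "T \<in> carrier_mat m m"
  defines "F \<equiv> four_block_mat (1\<^sub>m k) (0\<^sub>m k m) (0\<^sub>m m k) V"
  shows "F * four_block_mat B1 (B2 * V) (0\<^sub>m m k) T * mat_adjoint F
    = four_block_mat B1 B2 (0\<^sub>m m k) (V * T * mat_adjoint V)"
proof -
  note v = unitaryD[OF V]
  have B2V: "B2 * V \<in> carrier_mat k m" and VT: "V * T \<in> carrier_mat m m"
    and VTV: "V * T * mat_adjoint V \<in> carrier_mat m m"
    using B2 T v by (auto intro!: mult_carrier_mat)
  have "F * four_block_mat B1 (B2 * V) (0\<^sub>m m k) T = four_block_mat B1 (B2 * V) (0\<^sub>m m k) (V * T)"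
    unfolding F_def using B1 B2V T v
    by (simp add: mult_four_block_mat[of _ k k _ m _ m _ _ k _ m] left_mult_one_mat[OF B2V]
        right_add_zero_mat[OF B2V] left_mult_zero_mat[OF B2V] left_add_zero_mat[OF VT])
  moreover have "mat_adjoint F = four_block_mat (1\<^sub>m k) (0\<^sub>m k m) (0\<^sub>m m k) (mat_adjoint V)"
    unfolding F_def using v by (simp add: mat_adjoint_four_block_mat[of _ k k _ m _ m])
  ultimately show ?thesis
    using B1 B2 B2V VT T v
    by (simp add: mult_four_block_mat[of _ k k _ m _ m _ _ k _ m] left_add_zero_mat[OF VTV]
        assoc_mult_mat[of _ k m _ m _ m])
qed

lemma four_block_mat_of_first_col:
  fixes B :: "'a :: comm_ring_1 mat"
  assumes B: "B \<in> carrier_mat (1 + m) (1 + m)" and col0: "col B 0 = e \<cdot>\<^sub>v unit_vec (1 + m) 0"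
  obtains B1 B2 B3 where "B1 \<in> carrier_mat 1 1" "upper_triangular B1" "B2 \<in> carrier_mat 1 m"
    "B3 \<in> carrier_mat m m" "B = four_block_mat B1 B2 (0\<^sub>m m 1) B3"
proof -
  obtain B1 B2 B0 B3 where split: "split_block B 1 1 = (B1, B2, B0, B3)"
    by (cases "split_block B 1 1") auto
  from split_block[OF split] B have B1: "B1 \<in> carrier_mat 1 1" and B2: "B2 \<in> carrier_mat 1 m"
    and B3: "B3 \<in> carrier_mat m m" and B_blocks: "B = four_block_mat B1 B2 B0 B3"
    by auto
  have "B $$ (Suc i, 0) = 0" if "i < m" for i
    using arg_cong[OF col0, of "\<lambda>w. w $ Suc i"] B that by auto
  then have "B0 = 0\<^sub>m m 1"
    using split B unfolding split_block_def Let_def by auto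
  moreover have "upper_triangular B1" using B1 by (auto simp: upper_triangular_def)
  ultimately show ?thesis by (intro that[OF B1 _ B2 B3]) (simp_all add: B_blocks)
qed

lemma unitary_schur_decomposition:
  fixes A :: "complex mat"
  assumes "A \<in> carrier_mat n n"
  shows "\<exists>U T. unitary n U \<and> T \<in> carrier_mat n n \<and> upper_triangular T \<and> A = U * T * mat_adjoint U"
  using assms
proof (induction n arbitrary: A)
  case 0
  then have "A = 1\<^sub>m 0 * A * mat_adjoint (1\<^sub>m 0)" and "upper_triangular A"
    by (auto simp: upper_triangular_def)
  with 0 show ?case by (metis unitary_one)
next
  case (Suc m)
  obtain e v where v: "v \<in> carrier_vec (Suc m)" "v \<bullet>c v = 1" and ev: "A *\<^sub>v v = e \<cdot>\<^sub>v v"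
    using exists_unit_eigenvector[OF Suc.prems] by blast
  obtain W where W: "unitary (Suc m) W" "col W 0 = v"
    using exists_unitary_first_col[OF v] by blast
  define B where "B = mat_adjoint W * A * W"
  have "B \<in> carrier_mat (1 + m) (1 + m)"
    using Suc.prems unitaryD(1)[OF W(1)] unfolding B_def by (auto intro!: mult_carrier_mat)
  moreover have "col B 0 = e \<cdot>\<^sub>v unit_vec (1 + m) 0"
    unfolding B_def using unitary_conj_col_eigenvector[OF W(1) Suc.prems] W(2) ev by simp
  ultimately obtain B1 B2 B3 where B1: "B1 \<in> carrier_mat 1 1" "upper_triangular B1"
    and B2: "B2 \<in> carrier_mat 1 m" and B3: "B3 \<in> carrier_mat m m"
    and B_blocks: "B = four_block_mat B1 B2 (0\<^sub>m m 1) B3"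
    by (rule four_block_mat_of_first_col)
  obtain V T3 where V: "unitary m V" and T3: "T3 \<in> carrier_mat m m" "upper_triangular T3"
    and B3_eq: "B3 = V * T3 * mat_adjoint V"
    using Suc.IH[OF B3] by blast
  define F where "F = four_block_mat (1\<^sub>m 1) (0\<^sub>m 1 m) (0\<^sub>m m 1) V"
  define T where "T = four_block_mat B1 (B2 * V) (0\<^sub>m m 1) T3"
  have "B = F * T * mat_adjoint F"
    unfolding F_def T_def B_blocks B3_eq using four_block_mat_unitary_conj[OF V B1(1) B2 T3(1)] by simp
  moreover have F: "unitary (Suc m) F"
    unfolding F_def using unitary_four_block_mat[OF unitary_one[of 1] V] by simp
  have "upper_triangular T" unfolding T_def using B1 T3 by (intro upper_triangular_four_block)
  moreover have "T \<in> carrier_mat (Suc m) (Suc m)" unfolding T_def using B1 T3 by auto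
  moreover have "A = W * B * mat_adjoint W"
    unfolding B_def using unitary_conj_cancel(1)[OF W(1) Suc.prems] by simp
  ultimately have "A = (W * F) * T * mat_adjoint (W * F)"
    using unitaryD(1)[OF W(1)] unitaryD(1)[OF F]
    by (simp add: mat_adjoint_mult[of _ "Suc m" "Suc m"] mult_carrier_mat[of _ "Suc m" "Suc m"]
        assoc_mult_mat[of _ "Suc m" "Suc m" _ "Suc m" _ "Suc m"])
  then show ?case
    using unitary_mult[OF W(1) F] \<open>upper_triangular T\<close> \<open>T \<in> carrier_mat (Suc m) (Suc m)\<close>
    by blast
qed

lemma upper_triangular_hermitian_diagonal:
  fixes T :: "complex mat"
  assumes "T \<in> carrier_mat n n" "upper_triangular T" "mat_adjoint T = T"
  shows "diagonal_mat T"
  unfolding diagonal_mat_def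
proof (intro allI impI)
  fix i j assume ij: "i < dim_row T" "j < dim_col T" "i \<noteq> j"
  have "T $$ (i, j) = conjugate (T $$ (j, i))"
    using arg_cong[OF assms(3), of "\<lambda>M. M $$ (i, j)"] assms(1) ij by simp
  then show "T $$ (i, j) = 0"
    using assms(1,2) ij by (cases "j < i") (auto simp: upper_triangular_def)
qed

lemma hermitian_unitary_diagonalization:
  fixes A :: "complex mat"
  assumes A: "A \<in> carrier_mat n n" and herm: "mat_adjoint A = A"
  shows "\<exists>U L. unitary n U \<and> L \<in> carrier_mat n n \<and> diagonal_mat L \<and> A = U * L * mat_adjoint U"
proof -
  obtain U T where U: "unitary n U" and T: "T \<in> carrier_mat n n" "upper_triangular T"
    and A_eq: "A = U * T * mat_adjoint U"
    using unitary_schur_decomposition[OF A] by blast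
  note u = unitaryD[OF U]
  have "T = mat_adjoint U * A * U" using unitary_conj_cancel(2)[OF U T(1)] A_eq by simp
  then have "mat_adjoint T = T"
    using A u herm by (simp add: mat_adjoint_mult[of _ n n _ n] mult_carrier_mat[of _ n n]
        assoc_mult_mat[of _ n n _ n _ n])
  then show ?thesis using U T A_eq upper_triangular_hermitian_diagonal by blast
qed

section \<open>Spectral projectors\<close>

definition spectral_indicator :: "nat \<Rightarrow> (complex \<Rightarrow> bool) \<Rightarrow> complex mat \<Rightarrow> complex mat" where
  "spectral_indicator n Q L = mat n n (\<lambda>(i, j). if i = j \<and> Q (L $$ (i, i)) then 1 else 0)"

lemma spectral_indicator_carrier[simp]: "spectral_indicator n Q L \<in> carrier_mat n n"
  unfolding spectral_indicator_def by simp

lemma dim_spectral_indicator[simp]: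
  "dim_row (spectral_indicator n Q L) = n" "dim_col (spectral_indicator n Q L) = n"
  unfolding spectral_indicator_def by simp_all

lemma diagonal_spectral_indicator: "diagonal_mat (spectral_indicator n Q L)"
  unfolding spectral_indicator_def diagonal_mat_def by simp

lemma mat_adjoint_spectral_indicator[simp]:
  "mat_adjoint (spectral_indicator n Q L) = spectral_indicator n Q L"
  unfolding spectral_indicator_def by (rule eq_matI) auto

lemma spectral_indicator_fixes_eigenvector:
  assumes L: "L \<in> carrier_mat n n" "diagonal_mat L" and c: "c \<in> carrier_vec n"
    and ev: "L *\<^sub>v c = k \<cdot>\<^sub>v c" and "Q k"
  shows "spectral_indicator n Q L *\<^sub>v c = c"
proof (rule eq_vecI)
  fix i assume "i < dim_vec c"
  then have i: "i < n" using c by simp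
  have "L $$ (i, i) * c $ i = k * c $ i"
    using arg_cong[OF ev, of "\<lambda>w. w $ i"] mult_mat_vec_diagonal[OF L c i] i c by simp
  then have "c $ i = 0 \<or> Q (L $$ (i, i))" using \<open>Q k\<close> by auto
  then show "(spectral_indicator n Q L *\<^sub>v c) $ i = c $ i"
    using mult_mat_vec_diagonal[OF spectral_indicator_carrier diagonal_spectral_indicator c i] i
    by (auto simp: spectral_indicator_def)
qed (use c in simp)

lemma unitary_conj_eigenvector:
  assumes U: "unitary n U" and L: "L \<in> carrier_mat n n" and v: "v \<in> carrier_vec n"
    and ev: "(U * L * mat_adjoint U) *\<^sub>v v = k \<cdot>\<^sub>v v"
  shows "L *\<^sub>v (mat_adjoint U *\<^sub>v v) = k \<cdot>\<^sub>v (mat_adjoint U *\<^sub>v v)"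
proof -
  note u = unitaryD[OF U]
  have "mat_adjoint U * (U * L * mat_adjoint U) = L * mat_adjoint U"
    using u L by (simp add: assoc_mult_mat[of _ n n _ n _ n] mult_carrier_mat[of _ n n]
        unitary_cancel[OF U, where k = n])
  then have "L *\<^sub>v (mat_adjoint U *\<^sub>v v) = mat_adjoint U *\<^sub>v ((U * L * mat_adjoint U) *\<^sub>v v)"
    using u L v by (metis assoc_mult_mat_vec mat_adjoint_carrier mult_carrier_mat)
  then show ?thesis using u v ev by (simp add: mult_mat_vec[of _ n n])
qed

lemma unitary_col_eigenvector:
  assumes U: "unitary n U" and L: "L \<in> carrier_mat n n" "diagonal_mat L" and i: "i < n"
  shows "eigenvector (U * L * mat_adjoint U) (col U i) (L $$ (i, i))"
proof -
  note u = unitaryD[OF U]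
  have "col U i \<noteq> 0\<^sub>v n"
    using unitary_col_cscalar_prod[OF U i i] u i by auto
  moreover have "(U * L * mat_adjoint U) *\<^sub>v col U i = L $$ (i, i) \<cdot>\<^sub>v col U i"
  proof -
    have col: "col U i = U *\<^sub>v unit_vec n i" "mat_adjoint U *\<^sub>v col U i = unit_vec n i"
      using col_mult2[of U n n "1\<^sub>m n" n i] col_mult2[of "mat_adjoint U" n n U n i] u i by simp_all
    have "L *\<^sub>v unit_vec n i = L $$ (i, i) \<cdot>\<^sub>v unit_vec n i"
      by (rule eq_vecI) (use L i in \<open>auto simp: mult_mat_vec_diagonal diagonal_mat_def\<close>)
    then have "(U * L * mat_adjoint U) *\<^sub>v col U i = U *\<^sub>v (L $$ (i, i) \<cdot>\<^sub>v unit_vec n i)"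
      using u L i by (simp add: col(2) assoc_mult_mat_vec[of _ n n _ n] mult_carrier_mat[of _ n n])
    then show ?thesis using u by (simp add: mult_mat_vec[of _ n n] flip: col(1))
  qed
  ultimately show ?thesis using u L i unfolding eigenvector_def by auto
qed

lemma fixed_vectors_submodule:
  fixes M :: "'a :: field mat"
  assumes M: "M \<in> carrier_mat n n"
  shows "submodule class_ring {w \<in> carrier_vec n. M *\<^sub>v w = w} (module_vec TYPE('a) n)"
proof -
  interpret vec_space "TYPE('a)" n .
  show ?thesis
  proof (rule LinearCombinations.submodule.intro)
    show "Module.module class_ring (module_vec TYPE('a) n)" by (rule module_axioms)
    show "{w \<in> carrier_vec n. M *\<^sub>v w = w} \<subseteq> carrier (module_vec TYPE('a) n)"
      by (auto simp: module_vec_simps)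
    show "\<zero>\<^bsub>module_vec TYPE('a) n\<^esub> \<in> {w \<in> carrier_vec n. M *\<^sub>v w = w}"
      using M by (auto simp: module_vec_simps)
    fix v w assume "v \<in> {w \<in> carrier_vec n. M *\<^sub>v w = w}" "w \<in> {w \<in> carrier_vec n. M *\<^sub>v w = w}"
    then show "v \<oplus>\<^bsub>module_vec TYPE('a) n\<^esub> w \<in> {w \<in> carrier_vec n. M *\<^sub>v w = w}"
      using M by (auto simp: module_vec_simps mult_add_distrib_mat_vec)
  next
    fix a :: 'a and v assume "v \<in> {w \<in> carrier_vec n. M *\<^sub>v w = w}"
    then show "a \<odot>\<^bsub>module_vec TYPE('a) n\<^esub> v \<in> {w \<in> carrier_vec n. M *\<^sub>v w = w}"
      using M by (auto simp: module_vec_simps mult_mat_vec)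
  qed
qed

lemma unitary_conj_spectral_indicator_fixes_eigenvector:
  assumes U: "unitary n U" and L: "L \<in> carrier_mat n n" "diagonal_mat L"
    and ev: "eigenvector (U * L * mat_adjoint U) v k" and "Q k"
  shows "(U * spectral_indicator n Q L * mat_adjoint U) *\<^sub>v v = v"
proof -
  note u = unitaryD[OF U]
  define I where "I = spectral_indicator n Q L"
  have I: "I \<in> carrier_mat n n" unfolding I_def by simp
  have v: "v \<in> carrier_vec n" and "(U * L * mat_adjoint U) *\<^sub>v v = k \<cdot>\<^sub>v v"
    using ev u L unfolding eigenvector_def by auto
  then have "I *\<^sub>v (mat_adjoint U *\<^sub>v v) = mat_adjoint U *\<^sub>v v"
    unfolding I_def using unitary_conj_eigenvector[OF U L(1)] L \<open>Q k\<close> u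
    by (intro spectral_indicator_fixes_eigenvector) (auto intro: mult_mat_vec_carrier[of _ n n])
  moreover have "mat_adjoint U *\<^sub>v v \<in> carrier_vec n" using u v by (intro mult_mat_vec_carrier) auto
  then have "(U * I * mat_adjoint U) *\<^sub>v v = U *\<^sub>v (I *\<^sub>v (mat_adjoint U *\<^sub>v v))"
    using u I v
    by (simp add: assoc_mult_mat_vec[of "U * I" n n "mat_adjoint U" n v]
        assoc_mult_mat_vec[of U n n I n])
  ultimately show ?thesis using unitary_cancel_vec[OF U v] unfolding I_def by simp
qed

lemma mult_spectral_indicator_fixed:
  assumes P: "P \<in> carrier_mat n n" and U: "U \<in> carrier_mat n n"
    and fixed: "\<And>j. j < n \<Longrightarrow> Q (L $$ (j, j)) \<Longrightarrow> P *\<^sub>v col U j = col U j"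
  shows "P * (U * spectral_indicator n Q L) = U * spectral_indicator n Q L"
proof (rule mat_col_eqI)
  define I where "I = spectral_indicator n Q L"
  have I: "I \<in> carrier_mat n n" unfolding I_def by simp
  fix j assume "j < dim_col (U * spectral_indicator n Q L)"
  then have j: "j < n" using U by simp
  have "col I j = (if Q (L $$ (j, j)) then unit_vec n j else 0\<^sub>v n)"
    by (rule eq_vecI) (use j in \<open>auto simp: I_def spectral_indicator_def\<close>)
  moreover have "col U j = U *\<^sub>v unit_vec n j"
    using col_mult2[of U n n "1\<^sub>m n" n j] U j by simp
  ultimately have UI: "col (U * I) j = (if Q (L $$ (j, j)) then col U j else 0\<^sub>v n)"
    unfolding col_mult2[OF U I j] using mult_mat_vec_zero[OF U] by simp
  have "col (P * (U * I)) j = P *\<^sub>v col (U * I) j"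
    using P U I j by (intro col_mult2) auto
  then show "col (P * (U * spectral_indicator n Q L)) j = col (U * spectral_indicator n Q L) j"
    unfolding I_def[symmetric] UI using fixed[OF j] mult_mat_vec_zero[OF P] by auto
qed (use P U in auto)

lemma projector_onto_eigvecs_unitary_diag:
  assumes U: "unitary n U" and L: "L \<in> carrier_mat n n" "diagonal_mat L"
    and P: "projector_onto_eigvecs n (U * L * mat_adjoint U) Q P"
  shows "P = U * spectral_indicator n Q L * mat_adjoint U"
proof -
  note u = unitaryD[OF U]
  define I where "I = spectral_indicator n Q L"
  define E where "E = U * I * mat_adjoint U"
  define S where "S = {v. \<exists>k. Q k \<and> eigenvector (U * L * mat_adjoint U) v k}"
  have I: "I \<in> carrier_mat n n" unfolding I_def by simp
  have E: "E \<in> carrier_mat n n" unfolding E_def using u I by (auto intro!: mult_carrier_mat)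
  have P: "P \<in> carrier_mat n n" "P * P = P" "mat_adjoint P = P"
    and range: "{P *\<^sub>v x | x. x \<in> carrier_vec n} = cspan n S"
    using P unfolding projector_onto_eigvecs_def orth_projector_def S_def by auto
  interpret vec_space "TYPE(complex)" n .
  have S: "S \<subseteq> carrier_vec n" using u L unfolding S_def eigenvector_def by auto
  have "span S \<subseteq> {w \<in> carrier_vec n. E *\<^sub>v w = w}"
    using S unitary_conj_spectral_indicator_fixes_eigenvector[OF U L] unfolding S_def E_def I_def
    by (intro span_is_subset fixed_vectors_submodule[OF E[unfolded E_def I_def]]) auto
  then have EP: "E *\<^sub>v (P *\<^sub>v x) = P *\<^sub>v x" if "x \<in> carrier_vec n" for x
    using range that unfolding cspan_def by blast
  have "E * P = P"
  proof (rule mat_col_eqI)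
    fix j assume "j < dim_col P"
    then have j: "j < n" using P by simp
    have "col P j = P *\<^sub>v unit_vec n j" using col_mult2[of P n n "1\<^sub>m n" n j] P j by simp
    then show "col (E * P) j = col P j"
      using col_mult2[OF E P(1) j] EP[of "unit_vec n j"] by simp
  qed (use E P in auto)
  have "P *\<^sub>v v = v" if "v \<in> S" for v
  proof -
    have "v \<in> cspan n S" using in_own_span[OF S] that unfolding cspan_def by blast
    then obtain x where x: "x \<in> carrier_vec n" "v = P *\<^sub>v x" using range by blast
    then show ?thesis using P by (simp flip: assoc_mult_mat_vec[of P n n P n x])
  qed
  then have "P * (U * I) = U * I"
    unfolding I_def using unitary_col_eigenvector[OF U L] P(1) u(1)
    by (intro mult_spectral_indicator_fixed) (auto simp: S_def)
  then have "P * E = E"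
    unfolding E_def using u P I by (simp flip: assoc_mult_mat[of P n n "U * I" n _ n])
  have "P = mat_adjoint (E * P)" using \<open>E * P = P\<close> P by simp
  also have "\<dots> = P * mat_adjoint E" using E P by (simp add: mat_adjoint_mult[of _ n n _ n])
  also have "mat_adjoint E = E"
    unfolding E_def I_def using u I
    by (simp add: mat_adjoint_mult[of _ n n _ n] mult_carrier_mat[of _ n n]
        assoc_mult_mat[of _ n n _ n _ n])
  finally show ?thesis using \<open>P * E = E\<close> unfolding E_def I_def by simp
qed

lemma hermitian_spectral_part:
  fixes D :: "complex mat"
  assumes D: "D \<in> carrier_mat n n" "mat_adjoint D = D" and P: "projector_onto_eigvecs n D Q P"
  obtains U E where "unitary n U" "E \<in> carrier_mat n n" "diagonal_mat E"
    "\<And>i. i < n \<Longrightarrow> E $$ (i, i) = 0 \<or> Q (E $$ (i, i))"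
    "D * P = U * E * mat_adjoint U" "P * D = U * E * mat_adjoint U"
proof -
  obtain U L where U: "unitary n U" and L: "L \<in> carrier_mat n n" "diagonal_mat L"
    and D_eq: "D = U * L * mat_adjoint U"
    using hermitian_unitary_diagonalization[OF D] by blast
  note u = unitaryD[OF U]
  define I where "I = spectral_indicator n Q L"
  have I: "I \<in> carrier_mat n n" "diagonal_mat I"
    unfolding I_def by (simp_all add: diagonal_spectral_indicator)
  have P_eq: "P = U * I * mat_adjoint U"
    unfolding I_def using projector_onto_eigvecs_unitary_diag[OF U L] P D_eq by simp
  have conj_mult: "(U * A * mat_adjoint U) * (U * B * mat_adjoint U) = U * (A * B) * mat_adjoint U"
    if "A \<in> carrier_mat n n" "B \<in> carrier_mat n n" for A B
    using u that by (simp add: assoc_mult_mat[of _ n n _ n _ n] mult_carrier_mat[of _ n n]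
        unitary_cancel[OF U, where k = n])
  show ?thesis
  proof
    show "unitary n U" by (fact U)
    show "L * I \<in> carrier_mat n n" "diagonal_mat (L * I)"
      using L I by (simp_all add: diagonal_mat_mult)
    show "(L * I) $$ (i, i) = 0 \<or> Q ((L * I) $$ (i, i))" if "i < n" for i
      using index_mult_diagonal_mat[OF L(1) I(1,2) that that] that
      by (simp add: I_def spectral_indicator_def del: index_mult_mat(1))
    show "D * P = U * (L * I) * mat_adjoint U"
      unfolding D_eq P_eq using conj_mult L I by simp
    show "P * D = U * (L * I) * mat_adjoint U"
      unfolding D_eq P_eq using conj_mult L I diagonal_mat_mult_comm[OF L(1) I(1) L(2) I(2)] by simp
  qed
qed

section \<open>Trace inequalities\<close>

lemma mtrace_mult_unitary_conj_diagonal: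
  assumes U: "unitary n U" and E: "E \<in> carrier_mat n n" "diagonal_mat E" and X: "X \<in> carrier_mat n n"
  shows "mtrace (X * (U * E * mat_adjoint U))
    = (\<Sum>i\<in>{0..<n}. (conjugate (col U i) \<bullet> (X *\<^sub>v col U i)) * E $$ (i, i))"
proof -
  note u = unitaryD[OF U]
  have M: "mat_adjoint U * X * U \<in> carrier_mat n n" using u X by (auto intro!: mult_carrier_mat)
  have "mtrace (X * (U * E * mat_adjoint U)) = mtrace ((X * U * E) * mat_adjoint U)"
    using u X E by (simp add: assoc_mult_mat[of _ n n _ n _ n] mult_carrier_mat[of _ n n])
  also have "\<dots> = mtrace (mat_adjoint U * X * U * E)"
    using u X E by (subst mtrace_mult_comm[of _ n n]) (auto simp: assoc_mult_mat[of _ n n _ n _ n]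
        mult_carrier_mat[of _ n n])
  also have "\<dots> = (\<Sum>i\<in>{0..<n}. (mat_adjoint U * X * U) $$ (i, i) * E $$ (i, i))"
    by (rule mtrace_mult_diagonal_mat[OF M E])
  also have "\<dots> = (\<Sum>i\<in>{0..<n}. (conjugate (col U i) \<bullet> (X *\<^sub>v col U i)) * E $$ (i, i))"
    by (intro sum.cong) (simp_all add: index_mat_adjoint_mult_mult[OF u(1) X] del: index_mult_mat(1))
  finally show ?thesis .
qed

lemma mtrace_mult_unitary_conj_nonneg:
  assumes U: "unitary n U" and E: "E \<in> carrier_mat n n" "diagonal_mat E"
    and E_nonneg: "\<And>i. i < n \<Longrightarrow> 0 \<le> E $$ (i, i)"
    and X: "X \<in> carrier_mat n n"
    and X_nonneg: "\<And>u. u \<in> carrier_vec n \<Longrightarrow> u \<bullet>c u = 1 \<Longrightarrow> 0 \<le> conjugate u \<bullet> (X *\<^sub>v u)"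
  shows "0 \<le> mtrace (X * (U * E * mat_adjoint U))"
  unfolding mtrace_mult_unitary_conj_diagonal[OF U E X]
  using E_nonneg X_nonneg unitary_col_unit[OF U] by (intro sum_nonneg mult_nonneg_nonneg) auto

lemma mtrace_mult_unitary_conj_nonpos:
  assumes U: "unitary n U" and E: "E \<in> carrier_mat n n" "diagonal_mat E"
    and E_nonpos: "\<And>i. i < n \<Longrightarrow> E $$ (i, i) \<le> 0"
    and X: "X \<in> carrier_mat n n"
    and X_nonneg: "\<And>u. u \<in> carrier_vec n \<Longrightarrow> u \<bullet>c u = 1 \<Longrightarrow> 0 \<le> conjugate u \<bullet> (X *\<^sub>v u)"
  shows "mtrace (X * (U * E * mat_adjoint U)) \<le> 0"
  unfolding mtrace_mult_unitary_conj_diagonal[OF U E X]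
  using E_nonpos X_nonneg unitary_col_unit[OF U] by (intro sum_nonpos mult_nonneg_nonpos) auto

lemma psd_quadratic_form_le_mtrace:
  assumes psd: "psd_mat n A" and u: "u \<in> carrier_vec n" "u \<bullet>c u = 1"
  shows "conjugate u \<bullet> (A *\<^sub>v u) \<le> mtrace A"
proof -
  obtain W where W: "unitary n W" "col W 0 = u" using exists_unitary_first_col[OF u] by blast
  note w = unitaryD[OF W(1)]
  have A: "A \<in> carrier_mat n n" using psd unfolding psd_mat_def by simp
  have "0 < n" using u by (cases n) (auto simp: scalar_prod_def)
  have form_nonneg: "0 \<le> conjugate (col W i) \<bullet> (A *\<^sub>v col W i)" if "i < n" for i
    using psd unitary_col_unit[OF W(1) that] unfolding psd_mat_def by blast
  have "mtrace A = mtrace (mat_adjoint W * A * W)"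
    using w A by (subst mtrace_mult_comm[of _ n n]) (auto simp: assoc_mult_mat[of _ n n _ n _ n]
        mult_carrier_mat[of _ n n] unitary_cancel[OF W(1)])
  also have "\<dots> = (\<Sum>i\<in>{0..<n}. conjugate (col W i) \<bullet> (A *\<^sub>v col W i))"
    using w A carrier_matD[OF w(1)] unfolding mtrace_def
    by (intro sum.cong) (auto simp: index_mat_adjoint_mult_mult simp del: index_mult_mat(1))
  also have "\<dots> \<ge> conjugate (col W 0) \<bullet> (A *\<^sub>v col W 0)"
    using \<open>0 < n\<close> form_nonneg by (intro member_le_sum) auto
  finally show ?thesis using W(2) by simp
qed

lemma density_mat_quadratic_forms_nonneg:
  assumes rho: "density_mat n \<rho>" and u: "u \<in> carrier_vec n" "u \<bullet>c u = 1"
  shows "0 \<le> conjugate u \<bullet> (\<rho> *\<^sub>v u)" "0 \<le> conjugate u \<bullet> ((1\<^sub>m n - \<rho>) *\<^sub>v u)"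
proof -
  have psd: "psd_mat n \<rho>" and tr: "mtrace \<rho> = 1" and R: "\<rho> \<in> carrier_mat n n"
    using rho unfolding density_mat_def psd_mat_def by auto
  show "0 \<le> conjugate u \<bullet> (\<rho> *\<^sub>v u)" using psd u unfolding psd_mat_def by blast
  have "(1\<^sub>m n - \<rho>) *\<^sub>v u = u - \<rho> *\<^sub>v u"
    using R u by (simp add: minus_mult_distrib_mat_vec[of "1\<^sub>m n" n n])
  then have "conjugate u \<bullet> ((1\<^sub>m n - \<rho>) *\<^sub>v u) = u \<bullet>c u - conjugate u \<bullet> (\<rho> *\<^sub>v u)"
    using R u comm_scalar_prod[of "conjugate u" n u]
    by (simp add: scalar_prod_minus_distrib[of _ n])
  then show "0 \<le> conjugate u \<bullet> ((1\<^sub>m n - \<rho>) *\<^sub>v u)"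
    using psd_quadratic_form_le_mtrace[OF psd u] tr u(2) by simp
qed

lemma mtrace_mult_positive_part_nonneg:
  assumes D: "D \<in> carrier_mat n n" "mat_adjoint D = D"
    and P: "projector_onto_eigvecs n D (\<lambda>k. k > 0) P" and X: "X \<in> carrier_mat n n"
    and X_nonneg: "\<And>u. u \<in> carrier_vec n \<Longrightarrow> u \<bullet>c u = 1 \<Longrightarrow> 0 \<le> conjugate u \<bullet> (X *\<^sub>v u)"
  shows "0 \<le> mtrace (X * (D * P))" "0 \<le> mtrace (X * (P * D))"
proof -
  obtain U E where U: "unitary n U" "E \<in> carrier_mat n n" "diagonal_mat E"
    and E: "\<And>i. i < n \<Longrightarrow> E $$ (i, i) = 0 \<or> E $$ (i, i) > 0"
    and DP: "D * P = U * E * mat_adjoint U" "P * D = U * E * mat_adjoint U"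
    using hermitian_spectral_part[OF D P] by metis
  have E_sign: "0 \<le> E $$ (i, i)" if "i < n" for i using E[OF that] by auto
  show "0 \<le> mtrace (X * (D * P))"
    unfolding DP(1) by (rule mtrace_mult_unitary_conj_nonneg[OF U E_sign X X_nonneg])
  show "0 \<le> mtrace (X * (P * D))"
    unfolding DP(2) by (rule mtrace_mult_unitary_conj_nonneg[OF U E_sign X X_nonneg])
qed

lemma mtrace_mult_negative_part_nonpos:
  assumes D: "D \<in> carrier_mat n n" "mat_adjoint D = D"
    and P: "projector_onto_eigvecs n D (\<lambda>k. k < 0) P" and X: "X \<in> carrier_mat n n"
    and X_nonneg: "\<And>u. u \<in> carrier_vec n \<Longrightarrow> u \<bullet>c u = 1 \<Longrightarrow> 0 \<le> conjugate u \<bullet> (X *\<^sub>v u)"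
  shows "mtrace (X * (D * P)) \<le> 0" "mtrace (X * (P * D)) \<le> 0"
proof -
  obtain U E where U: "unitary n U" "E \<in> carrier_mat n n" "diagonal_mat E"
    and E: "\<And>i. i < n \<Longrightarrow> E $$ (i, i) = 0 \<or> E $$ (i, i) < 0"
    and DP: "D * P = U * E * mat_adjoint U" "P * D = U * E * mat_adjoint U"
    using hermitian_spectral_part[OF D P] by metis
  have E_sign: "E $$ (i, i) \<le> 0" if "i < n" for i using E[OF that] by auto
  show "mtrace (X * (D * P)) \<le> 0"
    unfolding DP(1) by (rule mtrace_mult_unitary_conj_nonpos[OF U E_sign X X_nonneg])
  show "mtrace (X * (P * D)) \<le> 0"
    unfolding DP(2) by (rule mtrace_mult_unitary_conj_nonpos[OF U E_sign X X_nonneg])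
qed

theorem lemma1:
  fixes N :: nat and \<rho>1 \<rho>2 Pp Pm :: "complex mat"
  assumes "density_mat N \<rho>1" and "density_mat N \<rho>2"
    and "projector_onto_eigvecs N (\<rho>1 - \<rho>2) (\<lambda>k. k > 0) Pp"
    and "projector_onto_eigvecs N (\<rho>1 - \<rho>2) (\<lambda>k. k < 0) Pm"
  shows "mtrace (Pp * (1\<^sub>m N - \<rho>1) * \<rho>1) \<ge> mtrace (Pp * (1\<^sub>m N - \<rho>1) * \<rho>2) \<and>
      mtrace (Pm * \<rho>1 * (1\<^sub>m N - \<rho>1)) \<ge> mtrace (Pm * \<rho>1 * (1\<^sub>m N - \<rho>2)) \<and>
      mtrace (Pp * (1\<^sub>m N - \<rho>2) * \<rho>2) \<ge> mtrace (Pp * (1\<^sub>m N - \<rho>1) * \<rho>2) \<and>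
      mtrace (Pm * \<rho>2 * (1\<^sub>m N - \<rho>2)) \<ge> mtrace (Pm * \<rho>1 * (1\<^sub>m N - \<rho>2))"
proof -
  define D where "D = \<rho>1 - \<rho>2"
  have \<rho>: "\<rho>1 \<in> carrier_mat N N" "\<rho>2 \<in> carrier_mat N N" "mat_adjoint \<rho>1 = \<rho>1" "mat_adjoint \<rho>2 = \<rho>2"
    using assms(1,2) unfolding density_mat_def psd_mat_def by auto
  then have D: "D \<in> carrier_mat N N" "mat_adjoint D = D"
    and D_complements: "(1\<^sub>m N - \<rho>2) - (1\<^sub>m N - \<rho>1) = D"
    unfolding D_def by (auto simp: mat_adjoint_minus[of _ N N] intro!: eq_matI)
  have complements: "1\<^sub>m N - \<rho>1 \<in> carrier_mat N N" "1\<^sub>m N - \<rho>2 \<in> carrier_mat N N"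
    using \<rho> by auto
  have P: "Pp \<in> carrier_mat N N" "Pm \<in> carrier_mat N N"
    using assms(3,4) unfolding projector_onto_eigvecs_def orth_projector_def by auto
  note pos = mtrace_mult_positive_part_nonneg[OF D assms(3)[folded D_def]]
    and neg = mtrace_mult_negative_part_nonpos[OF D assms(4)[folded D_def]]
    and forms1 = density_mat_quadratic_forms_nonneg[OF assms(1)]
    and forms2 = density_mat_quadratic_forms_nonneg[OF assms(2)]
  have "mtrace (Pp * (1\<^sub>m N - \<rho>1) * \<rho>2) \<le> mtrace (Pp * (1\<^sub>m N - \<rho>1) * \<rho>1)"
    using pos(1)[OF complements(1) forms1(2)] mtrace_mult_minus_right[OF P(1) complements(1) \<rho>(1,2)]
    by (simp flip: D_def) (metis diff_ge_0_iff_ge)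
  moreover have "mtrace (Pm * \<rho>1 * (1\<^sub>m N - \<rho>2)) \<le> mtrace (Pm * \<rho>1 * (1\<^sub>m N - \<rho>1))"
    using neg(1)[OF \<rho>(1) forms1(1)] mtrace_mult_minus_right[OF P(2) \<rho>(1) complements(2,1)]
    by (simp add: D_complements) (metis diff_le_0_iff_le)
  moreover have "mtrace (Pp * (1\<^sub>m N - \<rho>1) * \<rho>2) \<le> mtrace (Pp * (1\<^sub>m N - \<rho>2) * \<rho>2)"
    using pos(2)[OF \<rho>(2) forms2(1)] mtrace_mult_minus_mid[OF P(1) complements(2,1) \<rho>(2)]
    by (simp add: D_complements) (metis diff_ge_0_iff_ge)
  moreover have "mtrace (Pm * \<rho>1 * (1\<^sub>m N - \<rho>2)) \<le> mtrace (Pm * \<rho>2 * (1\<^sub>m N - \<rho>2))"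
    using neg(2)[OF complements(2) forms2(2)] mtrace_mult_minus_mid[OF P(2) \<rho>(1,2) complements(2)]
    by (simp flip: D_def) (metis diff_le_0_iff_le)
  ultimately show ?thesis by blast
qed

end
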